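(* Let $K$ be a finite simplicial complex with an orientation $\sigma$ and a weight function $w$, and let $i\ge 0$. Then $$\lambda_{\max}(\mathcal L_i^{up}(K))\le \lambda_{\max}(\mathcal Q_i^{up}(K)),$$ with equality if $(B_i(K),\sigma)$ is balanced. If moreover $B_i(K)$ is connected (i.e. $K$ is $(i+1)$-path connected in the paper's sense), then equality holds if and only if $(B_i(K),\sigma)$ is balanced.
   Context: A simplicial complex $K$ is a family of subsets of a finite vertex set closed under subsets, containing $\emptyset$; $S_j(K)$ is the set of faces of cardinality $j+1$. An orientation assigns to each face an ordering of its vertices up to even permutations. For an oriented $(i+1)$-face $[\bar F]=[v_0,\dots,v_{i+1}]$ and an oriented $i$-face $[F]$, $\mathrm{sgn}([F],\partial[\bar F])=\pm(-1)^j$ if $F=\bar F\setminus\{v_j\}$ (sign $+$ iff $[F]$ has the orientation $[v_0,\dots,\hat v_j,\dots,v_{i+1}]$), and $0$ if $F\not\subset \bar F$. A weight function $w:K\to\mathbb R_{>0}$ gives diagonal matrices $W_j=\mathrm{diag}(w(F))_{F\in S_j(K)}$. $D_i$ is the $S_{i+1}(K)\times S_i(K)$ matrix with entries $\mathrm{sgn}([F],\partial[\bar F])$. The $i$-up Laplacian is $\mathcal L_i^{up}(K)=W_i^{-1}D_i^\top W_{i+1}D_i$ and the $i$-up signless Laplacian is $\mathcal Q_i^{up}(K)=W_i^{-1}|D_i|^\top W_{i+1}|D_i|$, where $|A|$ is the entrywise absolute value. Both have real spectra (they are self-adjoint w.r.t. the inner product $\sum_F w(F)f(F)g(F)$), and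 $\lambda_{\max}$ denotes the largest eigenvalue. The incidence graph $B_i(K)$ is the bipartite graph on $S_i(K)\cup S_{i+1}(K)$ with edges $\{F,\bar F\}$ for $F\subset\bar F$, signed by $\mathrm{sgn}([F],\partial[\bar F])$. A signed graph is balanced if every cycle has positive sign (product of its edge signs). *)

theory Defs
  imports Complex_Main
begin

definition simplicial_complex :: "'v set set \<Rightarrow> bool" where
  "simplicial_complex K \<longleftrightarrow> finite K \<and> {} \<in> K \<and> (\<forall>F\<in>K. \<forall>G. G \<subseteq> F \<longrightarrow> G \<in> K)"

definition faces :: "'v set set \<Rightarrow> nat \<Rightarrow> 'v set set" where
  "faces K j = {F \<in> K. card F = j + 1}"

text \<open>An orientation is given by a representative ordering of each face
  (a list of its distinct vertices); the orientation class is this ordering up to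
  even permutations.\<close>
definition is_orientation :: "'v set set \<Rightarrow> ('v set \<Rightarrow> 'v list) \<Rightarrow> bool" where
  "is_orientation K ori \<longleftrightarrow> (\<forall>F\<in>K. distinct (ori F) \<and> set (ori F) = F)"

definition is_weight :: "'v set set \<Rightarrow> ('v set \<Rightarrow> real) \<Rightarrow> bool" where
  "is_weight K w \<longleftrightarrow> (\<forall>F\<in>K. w F > 0)"

definition pos :: "'v list \<Rightarrow> 'v \<Rightarrow> nat" where
  "pos ys x = length (takeWhile (\<lambda>y. y \<noteq> x) ys)"

text \<open>Sign of the permutation carrying the ordering ys to the ordering xs
  (both lists of the same distinct elements), computed by counting inversions.\<close>
definition perm_sign :: "'v list \<Rightarrow> 'v list \<Rightarrow> real" where
  "perm_sign xs ys = (-1) ^ card {(k, l). k < l \<and> l < length xs \<and> pos ys (xs ! l) < pos ys (xs ! k)}"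

text \<open>sgn([F], \<partial>[Fb]) : if Fb = [v_0,...,v_{i+1}] and F = Fb minus v_j then
  (-1)^j times (+1 iff [F] has orientation [v_0,..,hat v_j,..,v_{i+1}]), else 0.\<close>
definition inc_sgn :: "('v set \<Rightarrow> 'v list) \<Rightarrow> 'v set \<Rightarrow> 'v set \<Rightarrow> real" where
  "inc_sgn ori F Fb =
     (if F \<subseteq> Fb \<and> card Fb = card F + 1 then
        (let v = the_elem (Fb - F); xs = ori Fb;
             j = pos xs v; ys = filter (\<lambda>x. x \<noteq> v) xs
         in (-1) ^ j * perm_sign (ori F) ys)
      else 0)"

text \<open>(W_i^{-1} D^T W_{i+1} D f)(F) with D entries given by s.\<close>
definition up_op :: "'v set set \<Rightarrow> ('v set \<Rightarrow> real) \<Rightarrow> ('v set \<Rightarrow> 'v set \<Rightarrow> real)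
                     \<Rightarrow> nat \<Rightarrow> ('v set \<Rightarrow> real) \<Rightarrow> 'v set \<Rightarrow> real" where
  "up_op K w s i f F = (1 / w F) *
      (\<Sum>Fb\<in>faces K (i+1). s F Fb * w Fb * (\<Sum>G\<in>faces K i. s G Fb * f G))"

definition up_eigenvalues :: "'v set set \<Rightarrow> ('v set \<Rightarrow> real) \<Rightarrow> ('v set \<Rightarrow> 'v set \<Rightarrow> real)
                     \<Rightarrow> nat \<Rightarrow> real set" where
  "up_eigenvalues K w s i = {mu. \<exists>f. (\<forall>F. F \<notin> faces K i \<longrightarrow> f F = 0) \<and> (\<exists>F\<in>faces K i. f F \<noteq> 0)
      \<and> (\<forall>F\<in>faces K i. up_op K w s i f F = mu * f F)}"

definition lmax_up_laplacian :: "'v set set \<Rightarrow> ('v set \<Rightarrow> 'v list) \<Rightarrow> ('v set \<Rightarrow> real) \<Rightarrow> nat \<Rightarrow> real" where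
  "lmax_up_laplacian K ori w i = Max (up_eigenvalues K w (inc_sgn ori) i)"

definition lmax_up_signless :: "'v set set \<Rightarrow> ('v set \<Rightarrow> 'v list) \<Rightarrow> ('v set \<Rightarrow> real) \<Rightarrow> nat \<Rightarrow> real" where
  "lmax_up_signless K ori w i = Max (up_eigenvalues K w (\<lambda>F Fb. \<bar>inc_sgn ori F Fb\<bar>) i)"

definition B_verts :: "'v set set \<Rightarrow> nat \<Rightarrow> 'v set set" where
  "B_verts K i = faces K i \<union> faces K (i+1)"

definition B_adj :: "'v set set \<Rightarrow> nat \<Rightarrow> 'v set \<Rightarrow> 'v set \<Rightarrow> bool" where
  "B_adj K i x y \<longleftrightarrow> (x \<in> faces K i \<and> y \<in> faces K (i+1) \<and> x \<subseteq> y)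
                      \<or> (y \<in> faces K i \<and> x \<in> faces K (i+1) \<and> y \<subseteq> x)"

definition B_edge_sign :: "('v set \<Rightarrow> 'v list) \<Rightarrow> 'v set \<Rightarrow> 'v set \<Rightarrow> real" where
  "B_edge_sign ori x y = (if x \<subseteq> y then inc_sgn ori x y else inc_sgn ori y x)"

definition B_cycle :: "'v set set \<Rightarrow> nat \<Rightarrow> 'v set list \<Rightarrow> bool" where
  "B_cycle K i cs \<longleftrightarrow> length cs \<ge> 3 \<and> distinct cs \<and>
     (\<forall>k < length cs. B_adj K i (cs ! k) (cs ! (Suc k mod length cs)))"

definition cycle_sign :: "('v set \<Rightarrow> 'v list) \<Rightarrow> 'v set list \<Rightarrow> real" where
  "cycle_sign ori cs = (\<Prod>k<length cs. B_edge_sign ori (cs ! k) (cs ! (Suc k mod length cs)))"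

definition B_balanced :: "'v set set \<Rightarrow> ('v set \<Rightarrow> 'v list) \<Rightarrow> nat \<Rightarrow> bool" where
  "B_balanced K ori i \<longleftrightarrow> (\<forall>cs. B_cycle K i cs \<longrightarrow> cycle_sign ori cs > 0)"

definition B_connected :: "'v set set \<Rightarrow> nat \<Rightarrow> bool" where
  "B_connected K i \<longleftrightarrow> (\<forall>x\<in>B_verts K i. \<forall>y\<in>B_verts K i. (B_adj K i)\<^sup>*\<^sup>* x y)"

end

theory Submission
  imports Defs "HOL-Analysis.Function_Topology"
begin

text \<open>
  The largest eigenvalue of an operator \<open>W\<^sub>S\<^sup>-\<^sup>1 D\<^sup>T W\<^sub>T D\<close> is the maximum of the Rayleigh quotient
  \<open>\<parallel>D f\<parallel>\<^sup>2 / \<parallel>f\<parallel>\<^sup>2\<close> in the weighted norms. Since \<open>|D f| \<le> |D| |f|\<close> entrywise, the quotient of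
  \<open>f\<close> for the signed incidence is at most that of \<open>|f|\<close> for the unsigned one, whence
  \<open>\<lambda>\<^sub>m\<^sub>a\<^sub>x(L) \<le> \<lambda>\<^sub>m\<^sub>a\<^sub>x(Q)\<close>. By Harary's theorem, balance of \<open>B\<^sub>i(K)\<close> means that there is a switching
  \<open>\<tau> : S\<^sub>i \<union> S\<^sub>i\<^sub>+\<^sub>1 \<rightarrow> {\<plusminus>1}\<close> with \<open>sgn(F, \<partial>F') = \<tau>(F) \<tau>(F')\<close> on every incidence; conjugating
  by \<open>diag \<tau>\<close> then turns \<open>L\<close> into \<open>Q\<close>. Conversely, if the maxima agree and \<open>f\<close> is a top
  eigenvector of \<open>L\<close>, then \<open>|f|\<close> is a top eigenvector of \<open>Q\<close> and the triangle inequality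
  \<open>|D f| \<le> |D| |f|\<close> is tight, so at each \<open>(i+1)\<close>-face all terms \<open>sgn \<cdot> f\<close> have one sign.
  A non-negative eigenvector of \<open>Q\<close> that vanishes somewhere vanishes on a whole connected
  component, so on a connected \<open>B\<^sub>i(K)\<close> the vector \<open>f\<close> has no zeros, and the signs of \<open>f\<close>
  and of \<open>D f\<close> form the required switching.
\<close>

lemma quadratic_nonneg_imp_linear_coeff_zero:
  fixes \<beta> \<gamma> :: real
  assumes "\<And>t. 0 \<le> 2 * t * \<beta> + t\<^sup>2 * \<gamma>"
  shows "\<beta> = 0"
proof (rule ccontr)
  assume "\<beta> \<noteq> 0"
  then have sq: "\<beta> * \<beta> > 0" by (metis not_real_square_gt_zero)
  show False
  proof (cases "\<gamma> \<le> 0")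
    case True
    have "0 \<le> 2 * (-\<beta>) * \<beta> + (-\<beta>)\<^sup>2 * \<gamma>" by (rule assms)
    moreover have "(-\<beta>)\<^sup>2 * \<gamma> \<le> 0" using True by (simp add: mult_nonneg_nonpos)
    ultimately show False using sq by (simp add: power2_eq_square)
  next
    case False
    have "0 \<le> 2 * (-\<beta> / \<gamma>) * \<beta> + (-\<beta> / \<gamma>)\<^sup>2 * \<gamma>" by (rule assms)
    also have "\<dots> = - (\<beta> * \<beta>) / \<gamma>" using False by (simp add: power2_eq_square field_simps)
    finally show False using sq False by (simp add: field_simps)
  qed
qed

lemma abs_sum_eq_sum_abs_imp_sgn:
  fixes x :: "'a \<Rightarrow> real"
  assumes "finite A" and eq: "\<bar>sum x A\<bar> = (\<Sum>a\<in>A. \<bar>x a\<bar>)" and a: "a \<in> A" "x a \<noteq> 0"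
  shows "sgn (sum x A) = sgn (x a)"
proof (cases "sum x A \<ge> 0")
  case True
  have "(\<Sum>a\<in>A. \<bar>x a\<bar> - x a) = 0" using eq True by (simp add: sum_subtractf)
  then have "\<forall>a\<in>A. \<bar>x a\<bar> - x a = 0" by (subst (asm) sum_nonneg_eq_0_iff) (auto simp: \<open>finite A\<close>)
  then have "\<forall>a\<in>A. 0 \<le> x a" by (metis abs_ge_zero eq_iff_diff_eq_0)
  moreover have "x a \<le> sum x A" using calculation a \<open>finite A\<close> by (intro member_le_sum) auto
  ultimately have "0 < x a" "x a \<le> sum x A" using a by force+
  then show ?thesis by (simp add: sgn_if)
next
  case False
  have "(\<Sum>a\<in>A. \<bar>x a\<bar> + x a) = 0" using eq False by (simp add: sum.distrib)
  then have "\<forall>a\<in>A. \<bar>x a\<bar> + x a = 0" by (subst (asm) sum_nonneg_eq_0_iff) (auto simp: \<open>finite A\<close>)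
  then have "\<forall>a\<in>A. x a \<le> 0" by (metis abs_ge_zero add_eq_0_iff2 neg_0_le_iff_le)
  moreover have "- x a \<le> - sum x A" using calculation a \<open>finite A\<close>
    unfolding sum_negf[symmetric] by (intro member_le_sum) auto
  ultimately have "x a < 0" using a by force
  then show ?thesis using False by (simp add: sgn_if)
qed

lemma abs_eq_1_imp_mult_self_eq_1: "\<bar>a\<bar> = 1 \<Longrightarrow> a * a = (1::real)"
  by (metis abs_mult_self_eq mult_1)

lemma eq_iff_abs_eq_mult:
  fixes e t :: real
  assumes "\<bar>e\<bar> = 1" "\<bar>t\<bar> = 1"
  shows "e = t \<longleftrightarrow> \<bar>e\<bar> = t * e"
proof -
  have "e = 1 \<or> e = -1" "t = 1 \<or> t = -1" using assms by (auto simp: abs_eq_iff)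
  then show ?thesis by auto
qed

section \<open>Switching and balance of signed graphs\<close>

fun walk_sign :: "('a \<Rightarrow> 'a \<Rightarrow> real) \<Rightarrow> 'a list \<Rightarrow> real" where
  "walk_sign \<sigma> (x # y # xs) = \<sigma> x y * walk_sign \<sigma> (y # xs)"
| "walk_sign \<sigma> _ = 1"

lemma walk_sign_append: "walk_sign \<sigma> (xs @ y # ys) = walk_sign \<sigma> (xs @ [y]) * walk_sign \<sigma> (y # ys)"
  by (induction xs rule: induct_list012) auto

lemma successively_append_Cons_iff:
  "successively A (xs @ y # ys) \<longleftrightarrow> successively A (xs @ [y]) \<and> successively A (y # ys)"
  by (induction xs rule: induct_list012) auto

lemma walk_sign_append_walks:
  "xs \<noteq> [] \<Longrightarrow> ys \<noteq> [] \<Longrightarrow> walk_sign \<sigma> (xs @ ys) = walk_sign \<sigma> xs * \<sigma> (last xs) (hd ys) * walk_sign \<sigma> ys"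
  by (induction xs rule: induct_list012) (auto simp: neq_Nil_conv)

lemma walk_sign_rev:
  assumes "\<And>x y. \<sigma> x y = \<sigma> y x"
  shows "walk_sign \<sigma> (rev p) = walk_sign \<sigma> p"
proof (induction p rule: induct_list012)
  case (3 x y xs)
  have "walk_sign \<sigma> (rev (x # y # xs)) = walk_sign \<sigma> (rev (y # xs)) * \<sigma> y x"
    using walk_sign_append[of \<sigma> "rev xs" y "[x]"] by simp
  with 3 show ?case by (simp add: assms[of y x])
qed simp_all

lemma abs_walk_sign:
  assumes "\<And>x y. A x y \<Longrightarrow> \<bar>\<sigma> x y\<bar> = 1"
  shows "successively A p \<Longrightarrow> \<bar>walk_sign \<sigma> p\<bar> = 1"
  by (induction p rule: induct_list012) (simp_all add: abs_mult assms)

lemma walk_sign_switching: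
  assumes "\<And>x y. A x y \<Longrightarrow> \<sigma> x y = \<tau> x * \<tau> y" and "\<And>x. \<bar>\<tau> x\<bar> = 1"
  shows "successively A p \<Longrightarrow> p \<noteq> [] \<Longrightarrow> walk_sign \<sigma> p = \<tau> (hd p) * \<tau> (last p)"
proof (induction p rule: induct_list012)
  case (2 x)
  show ?case using assms(2)[of x] by (simp add: abs_eq_1_imp_mult_self_eq_1)
next
  case (3 x y xs)
  have "\<tau> y * \<tau> y = 1" using assms(2)[of y] by (rule abs_eq_1_imp_mult_self_eq_1)
  have "walk_sign \<sigma> (x # y # xs) = \<tau> x * (\<tau> y * \<tau> y) * \<tau> (last (y # xs))"
    using 3 assms(1)[of x y] by simp
  with \<open>\<tau> y * \<tau> y = 1\<close> show ?case by simp
qed simp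

lemma rtranclp_imp_walk:
  "A\<^sup>*\<^sup>* x y \<Longrightarrow> \<exists>p. successively A p \<and> p \<noteq> [] \<and> hd p = x \<and> last p = y"
proof (induction rule: rtranclp_induct)
  case base
  show ?case by (rule exI[of _ "[x]"]) simp
next
  case (step y z)
  then obtain p where "successively A p" "p \<noteq> []" "hd p = x" "last p = y" by blast
  with step(2) show ?case by (intro exI[of _ "p @ [z]"]) (simp add: successively_append_iff)
qed

lemma walk_sign_conv_prod: "walk_sign \<sigma> xs = (\<Prod>k<length xs - 1. \<sigma> (xs ! k) (xs ! Suc k))"
  by (induction xs rule: induct_list012) (simp_all add: prod.lessThan_Suc_shift del: prod.lessThan_Suc)

lemma nth_snoc_hd_Suc:
  assumes "k < length cs" shows "(cs @ [hd cs]) ! Suc k = cs ! (Suc k mod length cs)"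
proof (cases "Suc k = length cs")
  case True
  then have "cs \<noteq> []" by auto
  with True show ?thesis by (simp add: nth_append hd_conv_nth)
next
  case False
  with assms show ?thesis by (simp add: nth_append)
qed

lemma successively_snoc_hd_iff:
  "successively A (cs @ [hd cs]) \<longleftrightarrow> (\<forall>k<length cs. A (cs ! k) (cs ! (Suc k mod length cs)))"
proof -
  have "(cs @ [hd cs]) ! k = cs ! k" if "k < length cs" for k using that by (simp add: nth_append)
  then show ?thesis unfolding successively_conv_nth by (simp add: nth_snoc_hd_Suc)
qed

lemma walk_sign_snoc_hd:
  "walk_sign \<sigma> (cs @ [hd cs]) = (\<Prod>k<length cs. \<sigma> (cs ! k) (cs ! (Suc k mod length cs)))"
proof -
  have "(cs @ [hd cs]) ! k = cs ! k" if "k < length cs" for k using that by (simp add: nth_append)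
  then show ?thesis unfolding walk_sign_conv_prod by (simp add: nth_snoc_hd_Suc)
qed

definition positive_cycles :: "('a \<Rightarrow> 'a \<Rightarrow> bool) \<Rightarrow> ('a \<Rightarrow> 'a \<Rightarrow> real) \<Rightarrow> bool" where
  "positive_cycles A \<sigma> \<longleftrightarrow> (\<forall>cs. 3 \<le> length cs \<longrightarrow> distinct cs \<longrightarrow> successively A (cs @ [hd cs])
     \<longrightarrow> 0 < walk_sign \<sigma> (cs @ [hd cs]))"

lemma distinct_closed_walk_sign_eq_1:
  assumes irrefl: "\<And>x. \<not> A x x" and sym: "\<And>x y. \<sigma> x y = \<sigma> y x"
    and unit: "\<And>x y. A x y \<Longrightarrow> \<bar>\<sigma> x y\<bar> = 1" and pos: "positive_cycles A \<sigma>"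
    and walk: "successively A (cs @ [hd cs])" and "distinct cs" "cs \<noteq> []"
  shows "walk_sign \<sigma> (cs @ [hd cs]) = 1"
proof -
  have "length cs \<noteq> 0" using \<open>cs \<noteq> []\<close> by simp
  then consider "length cs = 1" | "length cs = 2" | "3 \<le> length cs" by linarith
  then show ?thesis
  proof cases
    case 1
    then obtain x where "cs = [x]" by (auto simp: length_Suc_conv)
    with walk irrefl show ?thesis by simp
  next
    case 2
    then obtain x y where "cs = [x, y]" by (auto simp: length_Suc_conv numeral_2_eq_2)
    with walk have "\<bar>\<sigma> x y\<bar> = 1" by (simp add: unit)
    then have "\<sigma> x y * \<sigma> x y = 1" by (rule abs_eq_1_imp_mult_self_eq_1)
    with \<open>cs = [x, y]\<close> show ?thesis by (simp add: sym[of y x])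
  next
    case 3
    with \<open>distinct cs\<close> walk pos have "0 < walk_sign \<sigma> (cs @ [hd cs])"
      unfolding positive_cycles_def by blast
    with abs_walk_sign[of A \<sigma>, OF unit walk] show ?thesis by simp
  qed
qed

text \<open>A closed walk that is not a cycle splits at a repeated vertex into two shorter closed walks.\<close>

lemma closed_walk_sign_eq_1:
  assumes irrefl: "\<And>x. \<not> A x x" and sym: "\<And>x y. \<sigma> x y = \<sigma> y x"
    and unit: "\<And>x y. A x y \<Longrightarrow> \<bar>\<sigma> x y\<bar> = 1" and pos: "positive_cycles A \<sigma>"
  shows "successively A (cs @ [hd cs]) \<Longrightarrow> cs \<noteq> [] \<Longrightarrow> walk_sign \<sigma> (cs @ [hd cs]) = 1"
proof (induction "length cs" arbitrary: cs rule: less_induct)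
  case less
  show ?case
  proof (cases "distinct cs")
    case True
    with less.prems show ?thesis
      using distinct_closed_walk_sign_eq_1[OF irrefl sym unit pos] by blast
  next
    case False
    then obtain a v b c where cs: "cs = a @ [v] @ b @ [v] @ c" using not_distinct_decomp by blast
    define x where "x = hd cs"
    define cs' where "cs' = a @ v # c"
    have hd_cs': "hd cs' = x" unfolding x_def cs'_def cs by (cases a) simp_all
    have "successively A (a @ v # b @ v # c @ [x])" using less.prems(1) by (simp add: cs x_def)
    then have walks: "successively A (a @ [v])" "successively A (v # b @ [v])"
        "successively A (v # c @ [x])"
      using successively_append_Cons_iff[of A a v "b @ v # c @ [x]"]
        successively_append_Cons_iff[of A "v # b" v "c @ [x]"] by simp_all
    have "walk_sign \<sigma> (v # b @ [v]) = 1"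
      using less.hyps[of "v # b"] walks(2) cs by simp
    moreover have "walk_sign \<sigma> (cs' @ [hd cs']) = 1"
      using less.hyps[of cs'] walks(1,3) hd_cs' cs successively_append_Cons_iff[of A a v "c @ [x]"]
      unfolding cs'_def by simp
    ultimately show ?thesis
      using walk_sign_append[of \<sigma> a v "b @ v # c @ [x]"] walk_sign_append[of \<sigma> "v # b" v "c @ [x]"]
        walk_sign_append[of \<sigma> a v "c @ [x]"] hd_cs' unfolding cs x_def cs'_def by simp
  qed
qed

text \<open>
  \<open>\<tau> x\<close> is the sign of some walk from a fixed root of the component of \<open>x\<close> to \<open>x\<close>; since closed
  walks have sign \<open>1\<close>, it does not depend on the walk.
\<close>

lemma switching_of_positive_cycles:
  assumes "symp A" and irrefl: "\<And>x. \<not> A x x" and sym: "\<And>x y. \<sigma> x y = \<sigma> y x"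
    and unit: "\<And>x y. A x y \<Longrightarrow> \<bar>\<sigma> x y\<bar> = 1" and pos: "positive_cycles A \<sigma>"
  shows "\<exists>\<tau>. (\<forall>x. \<bar>\<tau> x\<bar> = 1) \<and> (\<forall>x y. A x y \<longrightarrow> \<sigma> x y = \<tau> x * \<tau> y)"
proof -
  have reach_iff: "A\<^sup>*\<^sup>* x z \<longleftrightarrow> A\<^sup>*\<^sup>* y z" if "A\<^sup>*\<^sup>* x y" for x y z
    using equivp_rtranclp[OF \<open>symp A\<close>] that by (metis equivp_def)
  define root where "root x = (SOME z. A\<^sup>*\<^sup>* x z)" for x
  have "A\<^sup>*\<^sup>* x (root x)" for x unfolding root_def by (rule someI[of _ x]) simp
  then have "A\<^sup>*\<^sup>* (root x) x" for x using reach_iff by blast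
  then have "\<exists>p. successively A p \<and> p \<noteq> [] \<and> hd p = root x \<and> last p = x" for x
    by (rule rtranclp_imp_walk)
  then obtain P where P: "\<And>x. successively A (P x) \<and> P x \<noteq> [] \<and> hd (P x) = root x \<and> last (P x) = x"
    by metis
  define \<tau> where "\<tau> x = walk_sign \<sigma> (P x)" for x
  have \<tau>_unit: "\<bar>\<tau> x\<bar> = 1" for x unfolding \<tau>_def using abs_walk_sign[of A \<sigma>, OF unit] P by blast
  have "\<sigma> x y = \<tau> x * \<tau> y" if "A x y" for x y
  proof -
    have "A\<^sup>*\<^sup>* x = A\<^sup>*\<^sup>* y" using reach_iff[of x y] that by auto
    then have "root x = root y" unfolding root_def by simp
    define W where "W = P x @ rev (P y)"
    have "successively (\<lambda>a b. A b a) (P y)"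
      by (rule successively_mono[OF conjunct1[OF P[of y]]]) (rule sympD[OF \<open>symp A\<close>])
    then have "successively A (rev (P y))" by simp
    then have "successively A W" unfolding W_def using P[of x] P[of y] that
      by (simp add: successively_append_iff hd_rev)
    moreover have "W = butlast W @ [hd (butlast W)]" "butlast W \<noteq> []"
      using P[of x] P[of y] \<open>root x = root y\<close> unfolding W_def
      by (auto simp: butlast_append last_rev hd_append neq_Nil_conv)
    ultimately have "walk_sign \<sigma> W = 1"
      using closed_walk_sign_eq_1[of A \<sigma> "butlast W", OF irrefl sym unit pos] by metis
    moreover have "walk_sign \<sigma> W = \<tau> x * \<sigma> x y * \<tau> y"
      unfolding W_def \<tau>_def using P[of x] P[of y]
      by (simp add: walk_sign_append_walks hd_rev walk_sign_rev[of \<sigma>, OF sym])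
    ultimately have "\<tau> x * \<sigma> x y * \<tau> y = 1" by simp
    moreover have "\<tau> x * \<tau> x = 1" "\<tau> y * \<tau> y = 1"
      using \<tau>_unit by (simp_all add: abs_eq_1_imp_mult_self_eq_1)
    moreover have "(\<tau> x * \<sigma> x y * \<tau> y) * (\<tau> x * \<tau> y) = \<sigma> x y * (\<tau> x * \<tau> x) * (\<tau> y * \<tau> y)"
      by (simp add: mult_ac)
    ultimately show ?thesis by simp
  qed
  with \<tau>_unit show ?thesis by blast
qed

lemma positive_cycles_iff_switching:
  assumes "symp A" and "\<And>x. \<not> A x x" and "\<And>x y. \<sigma> x y = \<sigma> y x"
    and unit: "\<And>x y. A x y \<Longrightarrow> \<bar>\<sigma> x y\<bar> = 1"
  shows "positive_cycles A \<sigma> \<longleftrightarrow> (\<exists>\<tau>. (\<forall>x. \<bar>\<tau> x\<bar> = 1) \<and> (\<forall>x y. A x y \<longrightarrow> \<sigma> x y = \<tau> x * \<tau> y))"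
proof
  assume "\<exists>\<tau>. (\<forall>x. \<bar>\<tau> x\<bar> = 1) \<and> (\<forall>x y. A x y \<longrightarrow> \<sigma> x y = \<tau> x * \<tau> y)"
  then obtain \<tau> where \<tau>: "\<And>x. \<bar>\<tau> x\<bar> = 1" "\<And>x y. A x y \<Longrightarrow> \<sigma> x y = \<tau> x * \<tau> y" by blast
  show "positive_cycles A \<sigma>" unfolding positive_cycles_def
  proof (intro allI impI)
    fix cs :: "'a list" assume "3 \<le> length cs" and "successively A (cs @ [hd cs])"
    then have "walk_sign \<sigma> (cs @ [hd cs]) = \<tau> (hd cs) * \<tau> (hd cs)"
      using walk_sign_switching[of A \<sigma> \<tau>, OF \<tau>(2,1)] by (simp add: hd_append)
    then show "0 < walk_sign \<sigma> (cs @ [hd cs])" using \<tau>(1) by (simp add: abs_eq_1_imp_mult_self_eq_1)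
  qed
qed (rule switching_of_positive_cycles[OF assms])

section \<open>Rayleigh quotients of weighted up-operators\<close>

definition switching_equivalent_abs :: "'a set \<Rightarrow> 'a set \<Rightarrow> ('a \<Rightarrow> 'a \<Rightarrow> real) \<Rightarrow> bool" where
  "switching_equivalent_abs S T s \<longleftrightarrow>
     (\<exists>\<tau>. (\<forall>x. \<bar>\<tau> x\<bar> = 1) \<and> (\<forall>G\<in>S. \<forall>b\<in>T. \<bar>s G b\<bar> = \<tau> G * \<tau> b * s G b))"

definition bipartite_adj :: "'a set \<Rightarrow> 'a set \<Rightarrow> ('a \<Rightarrow> 'a \<Rightarrow> real) \<Rightarrow> 'a \<Rightarrow> 'a \<Rightarrow> bool" where
  "bipartite_adj S T s x y \<longleftrightarrow> (x \<in> S \<and> y \<in> T \<and> s x y \<noteq> 0) \<or> (y \<in> S \<and> x \<in> T \<and> s y x \<noteq> 0)"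

text \<open>
  \<open>S\<close>, \<open>T\<close> and \<open>s\<close> play the roles of \<open>S\<^sub>i(K)\<close>, \<open>S\<^sub>i\<^sub>+\<^sub>1(K)\<close> and \<open>D\<^sub>i\<close> (with \<open>s G b\<close> the entry of \<open>D\<^sub>i\<close>
  at \<open>(b, G)\<close>): \<open>coboundary s f = D f\<close>, \<open>up_laplacian s = W\<^sub>S\<^sup>-\<^sup>1 D\<^sup>T W\<^sub>T D\<close> and
  \<open>energy s f = \<parallel>D f\<parallel>\<^sup>2\<close>.
\<close>

locale weighted_bipartite =
  fixes S T :: "'a set" and w :: "'a \<Rightarrow> real"
  assumes finite_S: "finite S" and finite_T: "finite T"
    and weight_pos_S: "F \<in> S \<Longrightarrow> 0 < w F" and weight_pos_T: "b \<in> T \<Longrightarrow> 0 < w b"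
begin

definition coboundary :: "('a \<Rightarrow> 'a \<Rightarrow> real) \<Rightarrow> ('a \<Rightarrow> real) \<Rightarrow> 'a \<Rightarrow> real" where
  "coboundary s f b = (\<Sum>G\<in>S. s G b * f G)"

definition up_laplacian :: "('a \<Rightarrow> 'a \<Rightarrow> real) \<Rightarrow> ('a \<Rightarrow> real) \<Rightarrow> 'a \<Rightarrow> real" where
  "up_laplacian s f F = 1 / w F * (\<Sum>b\<in>T. s F b * w b * coboundary s f b)"

definition winner :: "('a \<Rightarrow> real) \<Rightarrow> ('a \<Rightarrow> real) \<Rightarrow> real" where
  "winner f g = (\<Sum>F\<in>S. w F * f F * g F)"

definition wnorm2 :: "('a \<Rightarrow> real) \<Rightarrow> real" where
  "wnorm2 f = (\<Sum>F\<in>S. w F * (f F)\<^sup>2)"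

definition energy :: "('a \<Rightarrow> 'a \<Rightarrow> real) \<Rightarrow> ('a \<Rightarrow> real) \<Rightarrow> real" where
  "energy s f = (\<Sum>b\<in>T. w b * (coboundary s f b)\<^sup>2)"

definition eigenvector :: "('a \<Rightarrow> 'a \<Rightarrow> real) \<Rightarrow> real \<Rightarrow> ('a \<Rightarrow> real) \<Rightarrow> bool" where
  "eigenvector s \<mu> f \<longleftrightarrow> (\<exists>F\<in>S. f F \<noteq> 0) \<and> (\<forall>F\<in>S. up_laplacian s f F = \<mu> * f F)"

definition eigenvalues :: "('a \<Rightarrow> 'a \<Rightarrow> real) \<Rightarrow> real set" where
  "eigenvalues s = {\<mu>. \<exists>f. (\<forall>F. F \<notin> S \<longrightarrow> f F = 0) \<and> (\<exists>F\<in>S. f F \<noteq> 0)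
     \<and> (\<forall>F\<in>S. up_laplacian s f F = \<mu> * f F)}"

lemma coboundary_cong: "(\<And>G. G \<in> S \<Longrightarrow> f G = g G) \<Longrightarrow> coboundary s f = coboundary s g"
  unfolding coboundary_def by (intro ext sum.cong) auto

lemma eigenvalues_eq: "eigenvalues s = {\<mu>. \<exists>f. eigenvector s \<mu> f}"
  unfolding eigenvalues_def
proof (intro Collect_cong iffI)
  fix \<mu> assume "\<exists>f. (\<forall>F. F \<notin> S \<longrightarrow> f F = 0) \<and> (\<exists>F\<in>S. f F \<noteq> 0)
     \<and> (\<forall>F\<in>S. up_laplacian s f F = \<mu> * f F)"
  then show "\<exists>f. eigenvector s \<mu> f" unfolding eigenvector_def by blast
next
  fix \<mu> assume "\<exists>f. eigenvector s \<mu> f"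
  then obtain f where "eigenvector s \<mu> f" by blast
  define f0 where "f0 F = (if F \<in> S then f F else 0)" for F
  have "coboundary s f0 = coboundary s f" by (rule coboundary_cong) (simp add: f0_def)
  with \<open>eigenvector s \<mu> f\<close> have "(\<forall>F. F \<notin> S \<longrightarrow> f0 F = 0) \<and> (\<exists>F\<in>S. f0 F \<noteq> 0)
     \<and> (\<forall>F\<in>S. up_laplacian s f0 F = \<mu> * f0 F)"
    unfolding eigenvector_def up_laplacian_def by (simp add: f0_def)
  then show "\<exists>f. (\<forall>F. F \<notin> S \<longrightarrow> f F = 0) \<and> (\<exists>F\<in>S. f F \<noteq> 0)
     \<and> (\<forall>F\<in>S. up_laplacian s f F = \<mu> * f F)" by blast
qed

lemma wnorm2_nonneg: "0 \<le> wnorm2 f"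
  unfolding wnorm2_def by (intro sum_nonneg) (simp add: weight_pos_S less_imp_le)

lemma wnorm2_pos: assumes "F \<in> S" "f F \<noteq> 0" shows "0 < wnorm2 f"
proof -
  have "0 < w F * (f F)\<^sup>2" using assms weight_pos_S by simp
  also have "\<dots> \<le> wnorm2 f" unfolding wnorm2_def
    using assms finite_S by (intro member_le_sum) (auto simp: weight_pos_S less_imp_le)
  finally show ?thesis .
qed

lemma winner_self: "winner f f = wnorm2 f"
  unfolding winner_def wnorm2_def by (simp add: power2_eq_square mult.assoc)

lemma winner_commute: "winner f g = winner g f"
  unfolding winner_def by (simp add: mult_ac)

lemma coboundary_scale: "coboundary s (\<lambda>F. c * f F) b = c * coboundary s f b"
  unfolding coboundary_def by (simp add: sum_distrib_left mult_ac)

lemma wnorm2_scale: "wnorm2 (\<lambda>F. c * f F) = c\<^sup>2 * wnorm2 f"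
  unfolding wnorm2_def by (simp add: sum_distrib_left mult_ac power_mult_distrib)

lemma energy_scale: "energy s (\<lambda>F. c * f F) = c\<^sup>2 * energy s f"
  unfolding energy_def coboundary_scale by (simp add: sum_distrib_left mult_ac power_mult_distrib)

lemma up_laplacian_scale: "up_laplacian s (\<lambda>F. c * f F) F = c * up_laplacian s f F"
  unfolding up_laplacian_def coboundary_scale by (simp add: sum_distrib_left mult_ac)

lemma winner_up_laplacian:
  "winner g (up_laplacian s f) = (\<Sum>b\<in>T. w b * coboundary s g b * coboundary s f b)"
proof -
  have "winner g (up_laplacian s f) = (\<Sum>F\<in>S. \<Sum>b\<in>T. g F * (s F b * w b * coboundary s f b))"
    unfolding winner_def up_laplacian_def
  proof (intro sum.cong refl)
    fix F assume "F \<in> S"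
    then have "w F \<noteq> 0" using weight_pos_S[of F] by simp
    then show "w F * g F * (1 / w F * (\<Sum>b\<in>T. s F b * w b * coboundary s f b))
        = (\<Sum>b\<in>T. g F * (s F b * w b * coboundary s f b))" by (simp add: sum_distrib_left mult.assoc)
  qed
  also have "\<dots> = (\<Sum>b\<in>T. \<Sum>F\<in>S. g F * (s F b * w b * coboundary s f b))"
    by (rule sum.swap)
  also have "\<dots> = (\<Sum>b\<in>T. w b * coboundary s g b * coboundary s f b)"
    unfolding coboundary_def[of s g] by (simp add: sum_distrib_left sum_distrib_right mult_ac)
  finally show ?thesis .
qed

lemma energy_eigenvector:
  assumes "\<forall>F\<in>S. up_laplacian s f F = \<mu> * f F"
  shows "energy s f = \<mu> * wnorm2 f"
proof -
  have "energy s f = winner f (up_laplacian s f)"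
    unfolding winner_up_laplacian energy_def by (simp add: power2_eq_square mult_ac)
  also have "\<dots> = \<mu> * winner f f"
    unfolding winner_def sum_distrib_left using assms by (intro sum.cong) auto
  finally show ?thesis by (simp add: winner_self)
qed

lemma eigenvectors_orthogonal:
  assumes "\<forall>F\<in>S. up_laplacian s f F = \<mu> * f F" "\<forall>F\<in>S. up_laplacian s g F = \<nu> * g F" "\<mu> \<noteq> \<nu>"
  shows "winner f g = 0"
proof -
  have "\<mu> * winner f g = winner g (up_laplacian s f)"
    unfolding winner_def sum_distrib_left using assms(1) by (intro sum.cong) auto
  also have "\<dots> = winner f (up_laplacian s g)"
    unfolding winner_up_laplacian by (simp add: mult_ac)
  also have "\<dots> = \<nu> * winner f g"
    unfolding winner_def sum_distrib_left using assms(2) by (intro sum.cong) auto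
  finally have "(\<mu> - \<nu>) * winner f g = 0" by (simp add: left_diff_distrib)
  then show ?thesis using assms(3) by simp
qed

lemma winner_sum_left: "winner (\<lambda>F. \<Sum>m\<in>M. c m * u m F) g = (\<Sum>m\<in>M. c m * winner (u m) g)"
  unfolding winner_def by (simp add: sum_distrib_left sum_distrib_right mult_ac sum.swap[of _ S])

lemma wnorm2_add_scaled:
  "wnorm2 (\<lambda>G. f G + t * g G) = wnorm2 f + 2 * t * winner g f + t\<^sup>2 * wnorm2 g"
  unfolding wnorm2_def winner_def
  by (simp add: power2_eq_square sum.distrib sum_distrib_left algebra_simps)

lemma energy_add_scaled:
  "energy s (\<lambda>G. f G + t * g G) = energy s f + 2 * t * winner g (up_laplacian s f) + t\<^sup>2 * energy s g"
proof -
  have "coboundary s (\<lambda>G. f G + t * g G) b = coboundary s f b + t * coboundary s g b" for b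
    unfolding coboundary_def by (simp add: sum.distrib sum_distrib_left algebra_simps)
  then show ?thesis unfolding energy_def winner_up_laplacian
    by (simp add: power2_eq_square sum.distrib sum_distrib_left algebra_simps)
qed

lemma winner_delta_left:
  assumes "F \<in> S" shows "winner (\<lambda>G. if G = F then 1 else 0) g = w F * g F"
proof -
  have "winner (\<lambda>G. if G = F then 1 else 0) g = (\<Sum>G\<in>S. if G = F then w F * g F else 0)"
    unfolding winner_def by (intro sum.cong) auto
  then show ?thesis using assms finite_S by simp
qed

text \<open>Bessel's inequality, applied to the indicator of \<open>F\<close>.\<close>

lemma orthonormal_pointwise_bound:
  assumes "finite M" and norm: "\<And>m. m \<in> M \<Longrightarrow> wnorm2 (u m) = 1"
    and orth: "\<And>m m'. m \<in> M \<Longrightarrow> m' \<in> M \<Longrightarrow> m \<noteq> m' \<Longrightarrow> winner (u m) (u m') = 0"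
    and "F \<in> S"
  shows "(\<Sum>m\<in>M. w F * (u m F)\<^sup>2) \<le> 1"
proof -
  define \<delta> where "\<delta> G = (if G = F then 1 else 0 :: real)" for G
  define a where "a m = w F * u m F" for m
  define v where "v G = (\<Sum>m\<in>M. a m * u m G)" for G
  have v_u: "winner v (u m') = a m'" if "m' \<in> M" for m'
  proof -
    have "winner v (u m') = (\<Sum>m\<in>M. if m = m' then a m' else 0)"
      unfolding v_def winner_sum_left using norm orth that
      by (intro sum.cong) (auto simp: winner_self)
    also have "\<dots> = a m'" using \<open>finite M\<close> that by simp
    finally show ?thesis .
  qed
  have "winner v v = (\<Sum>m\<in>M. a m * winner (u m) v)"
    using winner_sum_left[of a u M v] by (simp only: flip: v_def)
  also have "\<dots> = (\<Sum>m\<in>M. (a m)\<^sup>2)"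
    by (intro sum.cong) (simp_all add: winner_commute[of _ v] v_u power2_eq_square)
  finally have v_v: "winner v v = (\<Sum>m\<in>M. (a m)\<^sup>2)" .
  have \<delta>_v: "winner \<delta> v = (\<Sum>m\<in>M. (a m)\<^sup>2)"
    unfolding \<delta>_def winner_delta_left[OF \<open>F \<in> S\<close>] v_def a_def
    by (simp add: sum_distrib_left power2_eq_square mult_ac)
  have "0 \<le> wnorm2 (\<lambda>G. \<delta> G + (-1) * v G)" by (rule wnorm2_nonneg)
  also have "\<dots> = w F - (\<Sum>m\<in>M. (a m)\<^sup>2)"
    unfolding wnorm2_add_scaled winner_commute[of v \<delta>] \<delta>_v
    by (simp add: v_v winner_self[symmetric] \<delta>_def winner_delta_left[OF \<open>F \<in> S\<close>])
  finally have "(\<Sum>m\<in>M. (a m)\<^sup>2) \<le> w F * 1" by simp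
  also have "(\<Sum>m\<in>M. (a m)\<^sup>2) = w F * (\<Sum>m\<in>M. w F * (u m F)\<^sup>2)"
    unfolding a_def by (simp add: sum_distrib_left power2_eq_square mult_ac)
  finally show ?thesis using weight_pos_S[OF \<open>F \<in> S\<close>] by (simp only: mult_le_cancel_left_pos)
qed

lemma eigenvector_wnorm2_pos: "eigenvector s \<mu> f \<Longrightarrow> 0 < wnorm2 f"
  unfolding eigenvector_def using wnorm2_pos by blast

lemma finite_eigenvalues: "finite (eigenvalues s)"
proof (rule ccontr)
  assume "infinite (eigenvalues s)"
  then obtain M where M: "M \<subseteq> eigenvalues s" "finite M" "card M = Suc (card S)"
    using infinite_arbitrarily_large by blast
  then have "\<forall>\<mu>\<in>M. \<exists>f. eigenvector s \<mu> f" unfolding eigenvalues_eq by blast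
  then obtain e where e: "\<And>\<mu>. \<mu> \<in> M \<Longrightarrow> eigenvector s \<mu> (e \<mu>)" by metis
  define u where "u \<mu> = (\<lambda>F. 1 / sqrt (wnorm2 (e \<mu>)) * e \<mu> F)" for \<mu>
  have norm: "wnorm2 (u \<mu>) = 1" if "\<mu> \<in> M" for \<mu>
    using eigenvector_wnorm2_pos[OF e[OF that]] unfolding u_def wnorm2_scale by (simp add: power_divide)
  have eig: "\<forall>F\<in>S. up_laplacian s (u \<mu>) F = \<mu> * u \<mu> F" if "\<mu> \<in> M" for \<mu>
    using e[OF that] unfolding u_def up_laplacian_scale eigenvector_def by simp
  have orth: "winner (u \<mu>) (u \<nu>) = 0" if "\<mu> \<in> M" "\<nu> \<in> M" "\<mu> \<noteq> \<nu>" for \<mu> \<nu>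
    using eigenvectors_orthogonal[OF eig[OF that(1)] eig[OF that(2)] that(3)] .
  have "real (card M) = (\<Sum>\<mu>\<in>M. wnorm2 (u \<mu>))" using norm by simp
  also have "\<dots> = (\<Sum>F\<in>S. \<Sum>\<mu>\<in>M. w F * (u \<mu> F)\<^sup>2)"
    unfolding wnorm2_def by (rule sum.swap)
  also have "\<dots> \<le> (\<Sum>F\<in>S. 1)"
    using orthonormal_pointwise_bound[of M u, OF M(2) norm orth] by (intro sum_mono) blast
  finally show False using M(3) by simp
qed

lemma abs_le_of_wnorm2_eq_1:
  assumes "wnorm2 g = 1" and "F \<in> S"
  shows "\<bar>g F\<bar> \<le> 1 + (\<Sum>F\<in>S. 1 / w F)"
proof -
  define r where "r = 1 + (\<Sum>F\<in>S. 1 / w F)"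
  have "1 \<le> r" unfolding r_def by (simp add: sum_nonneg weight_pos_S less_imp_le)
  have "w F * (g F)\<^sup>2 \<le> wnorm2 g" unfolding wnorm2_def
    using assms(2) finite_S by (intro member_le_sum) (auto simp: weight_pos_S less_imp_le)
  then have "(g F)\<^sup>2 \<le> 1 / w F" using assms weight_pos_S[OF assms(2)] by (simp add: field_simps)
  also have "\<dots> \<le> (\<Sum>F\<in>S. 1 / w F)"
    using assms(2) finite_S by (intro member_le_sum) (auto simp: weight_pos_S less_imp_le)
  also have "\<dots> \<le> r" unfolding r_def by simp
  also have "r \<le> r\<^sup>2" using \<open>1 \<le> r\<close> by (simp add: power2_eq_square mult_le_cancel_left1)
  finally show ?thesis using power2_le_imp_le[of "\<bar>g F\<bar>" r] \<open>1 \<le> r\<close> unfolding r_def by simp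
qed

text \<open>The unit sphere of \<open>wnorm2\<close> is closed in the product topology and lies in a box.\<close>

lemma exists_energy_maximizer:
  assumes "S \<noteq> {}"
  shows "\<exists>f. wnorm2 f = 1 \<and> (\<forall>g. wnorm2 g = 1 \<longrightarrow> energy s g \<le> energy s f)"
proof -
  define X where "X = product_topology (\<lambda>_. euclideanreal) S"
  define r where "r = 1 + (\<Sum>F\<in>S. 1 / w F)"
  define C where "C = {f \<in> topspace X. wnorm2 f \<in> {1}} \<inter> PiE S (\<lambda>_. {-r..r})"
  have "continuous_map X euclideanreal wnorm2"
    unfolding X_def wnorm2_def by (intro continuous_intros finite_S) auto
  moreover have "compactin X (PiE S (\<lambda>_. {-r..r}))"
    unfolding X_def by (subst compactin_PiE) auto
  ultimately have "compactin X C"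
    unfolding C_def by (intro closed_Int_compactin closedin_continuous_map_preimage) auto
  moreover have "continuous_map X euclideanreal (energy s)"
    unfolding X_def energy_def coboundary_def by (intro continuous_intros finite_S finite_T) auto
  ultimately have "compact (energy s ` C)" using image_compactin by fastforce
  have restrict_in_C: "restrict g S \<in> C" if "wnorm2 g = 1" for g
  proof -
    have "g F \<in> {-r..r}" if "F \<in> S" for F
      using abs_le_of_wnorm2_eq_1[OF \<open>wnorm2 g = 1\<close> that] unfolding r_def
      by (auto dest: abs_le_D1 abs_le_D2)
    moreover have "wnorm2 (restrict g S) = 1" using that unfolding wnorm2_def by simp
    ultimately show ?thesis unfolding C_def X_def by auto
  qed
  obtain F0 where "F0 \<in> S" using assms by blast
  have "wnorm2 (\<lambda>F. 1 / sqrt (w F0) * (if F = F0 then 1 else 0)) = 1"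
    unfolding wnorm2_scale winner_self[symmetric] winner_delta_left[OF \<open>F0 \<in> S\<close>]
    using weight_pos_S[OF \<open>F0 \<in> S\<close>] by (simp add: power_divide)
  then have "C \<noteq> {}" using restrict_in_C by blast
  then obtain f where "f \<in> C" and f_max: "\<forall>h\<in>C. energy s h \<le> energy s f"
    using compact_attains_sup[OF \<open>compact (energy s ` C)\<close>] by auto
  have "energy s g \<le> energy s f" if "wnorm2 g = 1" for g
  proof -
    have "energy s (restrict g S) = energy s g"
      unfolding energy_def by (simp add: coboundary_cong[of "restrict g S" g])
    then show ?thesis using f_max restrict_in_C[OF that] by metis
  qed
  moreover have "wnorm2 f = 1" using \<open>f \<in> C\<close> unfolding C_def by simp
  ultimately show ?thesis by blast
qed

lemma energy_le_by_homogeneity: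
  assumes "\<And>g. wnorm2 g = 1 \<Longrightarrow> energy s g \<le> \<mu>"
  shows "energy s g \<le> \<mu> * wnorm2 g"
proof (cases "wnorm2 g = 0")
  case True
  have "g F = 0" if "F \<in> S" for F
    by (rule ccontr) (use wnorm2_pos[OF that, of g] True in simp)
  then have "coboundary s g = coboundary s (\<lambda>_. 0)" by (intro coboundary_cong) simp
  then have "energy s g = 0" unfolding energy_def by (simp add: coboundary_def)
  with True show ?thesis by simp
next
  case False
  then have pos: "0 < wnorm2 g" using wnorm2_nonneg[of g] by simp
  define c where "c = 1 / sqrt (wnorm2 g)"
  have "wnorm2 (\<lambda>F. c * g F) = 1" unfolding wnorm2_scale c_def using pos by (simp add: power_divide)
  then have "energy s (\<lambda>F. c * g F) \<le> \<mu>" by (rule assms)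
  then have "c\<^sup>2 * energy s g \<le> \<mu>" unfolding energy_scale .
  then show ?thesis using pos unfolding c_def by (simp add: field_simps)
qed

text \<open>First variation of the Rayleigh quotient at \<open>f\<close> in the direction of the indicator of \<open>F\<close>.\<close>

lemma maximizer_is_eigenvector:
  assumes le: "\<And>g. energy s g \<le> \<mu> * wnorm2 g" and eq: "energy s f = \<mu> * wnorm2 f" and "F \<in> S"
  shows "up_laplacian s f F = \<mu> * f F"
proof -
  define \<delta> where "\<delta> G = (if G = F then 1 else 0 :: real)" for G
  have \<delta>: "winner \<delta> h = w F * h F" for h unfolding \<delta>_def by (rule winner_delta_left[OF \<open>F \<in> S\<close>])
  have "\<delta> F = 1" unfolding \<delta>_def by simp
  have "0 \<le> 2 * t * (\<mu> * (w F * f F) - w F * up_laplacian s f F) + t\<^sup>2 * (\<mu> * w F - energy s \<delta>)" for t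
    using le[of "\<lambda>G. f G + t * \<delta> G"] eq \<open>\<delta> F = 1\<close>
    unfolding energy_add_scaled wnorm2_add_scaled \<delta> winner_self[symmetric]
    by (simp add: algebra_simps)
  then have "\<mu> * (w F * f F) - w F * up_laplacian s f F = 0"
    by (rule quadratic_nonneg_imp_linear_coeff_zero)
  then show ?thesis using weight_pos_S[OF \<open>F \<in> S\<close>] by simp
qed

lemma Max_eigenvalue:
  assumes "S \<noteq> {}"
  shows "Max (eigenvalues s) \<in> eigenvalues s" and "energy s g \<le> Max (eigenvalues s) * wnorm2 g"
proof -
  obtain f where f_norm: "wnorm2 f = 1" and f_max: "\<And>g. wnorm2 g = 1 \<Longrightarrow> energy s g \<le> energy s f"
    using exists_energy_maximizer[OF assms] by blast
  define \<mu> where "\<mu> = energy s f"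
  have le: "energy s g \<le> \<mu> * wnorm2 g" for g
    unfolding \<mu>_def by (rule energy_le_by_homogeneity[OF f_max])
  have "eigenvector s \<mu> f"
  proof -
    have "\<exists>F\<in>S. f F \<noteq> 0"
      by (rule ccontr) (use f_norm in \<open>simp add: wnorm2_def\<close>)
    moreover have "\<forall>F\<in>S. up_laplacian s f F = \<mu> * f F"
      using maximizer_is_eigenvector[OF le] f_norm unfolding \<mu>_def by simp
    ultimately show ?thesis unfolding eigenvector_def by blast
  qed
  then have \<mu>_mem: "\<mu> \<in> eigenvalues s" unfolding eigenvalues_eq by blast
  have "\<nu> \<le> \<mu>" if \<nu>: "\<nu> \<in> eigenvalues s" for \<nu>
  proof -
    obtain h where h: "eigenvector s \<nu> h" using \<nu> unfolding eigenvalues_eq by blast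
    then have "\<nu> * wnorm2 h \<le> \<mu> * wnorm2 h"
      using le[of h] energy_eigenvector[of s h \<nu>] unfolding eigenvector_def by simp
    then show ?thesis using eigenvector_wnorm2_pos[OF h] by simp
  qed
  then have "Max (eigenvalues s) = \<mu>" using \<mu>_mem finite_eigenvalues by (intro Max_eqI) auto
  then show "Max (eigenvalues s) \<in> eigenvalues s" "energy s g \<le> Max (eigenvalues s) * wnorm2 g"
    using \<mu>_mem le by simp_all
qed

lemma eigenvalues_switching_subset:
  assumes switch: "\<And>G b. G \<in> S \<Longrightarrow> b \<in> T \<Longrightarrow> s' G b = \<tau> G * \<tau> b * s G b"
    and unit: "\<And>x. \<bar>\<tau> x\<bar> = 1"
  shows "eigenvalues s \<subseteq> eigenvalues s'"
proof
  have \<tau>\<tau>: "\<tau> x * \<tau> x = 1" for x using unit by (rule abs_eq_1_imp_mult_self_eq_1)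
  have cob: "coboundary s' (\<lambda>G. \<tau> G * f G) b = \<tau> b * coboundary s f b" if "b \<in> T" for f b
  proof -
    have "coboundary s' (\<lambda>G. \<tau> G * f G) b = (\<Sum>G\<in>S. \<tau> b * (s G b * f G) * (\<tau> G * \<tau> G))"
      unfolding coboundary_def using that by (intro sum.cong) (simp_all add: switch mult_ac)
    then show ?thesis by (simp add: \<tau>\<tau> coboundary_def sum_distrib_left)
  qed
  have lap: "up_laplacian s' (\<lambda>G. \<tau> G * f G) F = \<tau> F * up_laplacian s f F" if "F \<in> S" for f F
  proof -
    have "up_laplacian s' (\<lambda>G. \<tau> G * f G) F
        = 1 / w F * (\<Sum>b\<in>T. \<tau> F * (s F b * w b * coboundary s f b) * (\<tau> b * \<tau> b))"
      unfolding up_laplacian_def using that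
      by (intro arg_cong[where f="(*) _"] sum.cong) (simp_all add: switch cob mult_ac)
    then show ?thesis by (simp add: \<tau>\<tau> up_laplacian_def sum_distrib_left mult_ac)
  qed
  fix \<mu> assume "\<mu> \<in> eigenvalues s"
  then obtain f where "eigenvector s \<mu> f" unfolding eigenvalues_eq by blast
  moreover have "\<tau> x \<noteq> 0" for x using unit[of x] by auto
  ultimately have "eigenvector s' \<mu> (\<lambda>G. \<tau> G * f G)"
    unfolding eigenvector_def by (simp add: lap)
  then show "\<mu> \<in> eigenvalues s'" unfolding eigenvalues_eq by blast
qed

lemma eigenvalues_abs_eq_if_switching_equivalent:
  assumes "switching_equivalent_abs S T s"
  shows "eigenvalues (\<lambda>G b. \<bar>s G b\<bar>) = eigenvalues s"
proof -
  obtain \<tau> where unit: "\<And>x. \<bar>\<tau> x\<bar> = 1" and switch: "\<And>G b. G \<in> S \<Longrightarrow> b \<in> T \<Longrightarrow> \<bar>s G b\<bar> = \<tau> G * \<tau> b * s G b"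
    using assms unfolding switching_equivalent_abs_def by blast
  have "s G b = \<tau> G * \<tau> b * \<bar>s G b\<bar>" if "G \<in> S" "b \<in> T" for G b
    using switch[OF that] abs_eq_1_imp_mult_self_eq_1[OF unit] by (simp add: algebra_simps)
  then have "eigenvalues (\<lambda>G b. \<bar>s G b\<bar>) \<subseteq> eigenvalues s"
    using eigenvalues_switching_subset[where s'=s and s="\<lambda>G b. \<bar>s G b\<bar>"] unit by blast
  moreover have "eigenvalues s \<subseteq> eigenvalues (\<lambda>G b. \<bar>s G b\<bar>)"
    using eigenvalues_switching_subset[where s'="\<lambda>G b. \<bar>s G b\<bar>" and s=s] switch unit by blast
  ultimately show ?thesis by blast
qed

lemma coboundary_abs: "coboundary (\<lambda>G b. \<bar>s G b\<bar>) (\<lambda>G. \<bar>f G\<bar>) b = (\<Sum>G\<in>S. \<bar>s G b * f G\<bar>)"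
  unfolding coboundary_def by (simp add: abs_mult)

lemma abs_coboundary_le: "\<bar>coboundary s f b\<bar> \<le> coboundary (\<lambda>G b. \<bar>s G b\<bar>) (\<lambda>G. \<bar>f G\<bar>) b"
  unfolding coboundary_abs unfolding coboundary_def by (rule sum_abs)

lemma energy_le_energy_abs: "energy s f \<le> energy (\<lambda>G b. \<bar>s G b\<bar>) (\<lambda>G. \<bar>f G\<bar>)"
  unfolding energy_def
proof (intro sum_mono mult_left_mono)
  fix b
  show "(coboundary s f b)\<^sup>2 \<le> (coboundary (\<lambda>G b. \<bar>s G b\<bar>) (\<lambda>G. \<bar>f G\<bar>) b)\<^sup>2"
    using abs_coboundary_le[of s f b] by (simp add: abs_le_square_iff[symmetric])
qed (simp add: weight_pos_T less_imp_le)

lemma abs_coboundary_eq_if_energy_eq: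
  assumes "energy s f = energy (\<lambda>G b. \<bar>s G b\<bar>) (\<lambda>G. \<bar>f G\<bar>)" and "b \<in> T"
  shows "\<bar>coboundary s f b\<bar> = coboundary (\<lambda>G b. \<bar>s G b\<bar>) (\<lambda>G. \<bar>f G\<bar>) b"
proof -
  define d where "d b = w b * ((coboundary (\<lambda>G b. \<bar>s G b\<bar>) (\<lambda>G. \<bar>f G\<bar>) b)\<^sup>2 - (coboundary s f b)\<^sup>2)" for b
  have nonneg: "0 \<le> d b" if "b \<in> T" for b
    using abs_coboundary_le[of s f b] weight_pos_T[OF that] unfolding d_def
    by (simp add: abs_le_square_iff[symmetric])
  have "sum d T = 0"
    using assms(1) unfolding d_def energy_def by (simp add: right_diff_distrib sum_subtractf)
  then have "d b = 0" using sum_nonneg_eq_0_iff[of T d] finite_T nonneg \<open>b \<in> T\<close> by blast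
  then have "(coboundary s f b)\<^sup>2 = (coboundary (\<lambda>G b. \<bar>s G b\<bar>) (\<lambda>G. \<bar>f G\<bar>) b)\<^sup>2"
    using weight_pos_T[OF \<open>b \<in> T\<close>] unfolding d_def by simp
  moreover have "0 \<le> coboundary (\<lambda>G b. \<bar>s G b\<bar>) (\<lambda>G. \<bar>f G\<bar>) b"
    unfolding coboundary_abs by (simp add: sum_nonneg)
  ultimately show ?thesis
    using power2_eq_iff_nonneg[of "\<bar>coboundary s f b\<bar>" "coboundary (\<lambda>G b. \<bar>s G b\<bar>) (\<lambda>G. \<bar>f G\<bar>) b"] by simp
qed

lemma wnorm2_abs: "wnorm2 (\<lambda>G. \<bar>f G\<bar>) = wnorm2 f"
  unfolding wnorm2_def by simp

lemma Max_eigenvalue_le_abs: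
  assumes "S \<noteq> {}"
  shows "Max (eigenvalues s) \<le> Max (eigenvalues (\<lambda>G b. \<bar>s G b\<bar>))"
proof -
  obtain f where f: "eigenvector s (Max (eigenvalues s)) f"
    using Max_eigenvalue(1)[OF assms] unfolding eigenvalues_eq by blast
  have "energy s f = Max (eigenvalues s) * wnorm2 f"
    by (rule energy_eigenvector) (use f in \<open>simp add: eigenvector_def\<close>)
  then have "Max (eigenvalues s) * wnorm2 f = energy s f" ..
  also have "\<dots> \<le> energy (\<lambda>G b. \<bar>s G b\<bar>) (\<lambda>G. \<bar>f G\<bar>)" by (rule energy_le_energy_abs)
  also have "\<dots> \<le> Max (eigenvalues (\<lambda>G b. \<bar>s G b\<bar>)) * wnorm2 f"
    using Max_eigenvalue(2)[OF assms, of "\<lambda>G b. \<bar>s G b\<bar>" "\<lambda>G. \<bar>f G\<bar>"] unfolding wnorm2_abs .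
  finally show ?thesis using eigenvector_wnorm2_pos[OF f] by simp
qed

lemma top_eigenvector_abs:
  assumes "S \<noteq> {}" and eq: "Max (eigenvalues s) = Max (eigenvalues (\<lambda>G b. \<bar>s G b\<bar>))"
    and f: "eigenvector s (Max (eigenvalues s)) f"
  shows "\<And>F. F \<in> S \<Longrightarrow> up_laplacian (\<lambda>G b. \<bar>s G b\<bar>) (\<lambda>G. \<bar>f G\<bar>) F = Max (eigenvalues s) * \<bar>f F\<bar>"
    and "\<And>b. b \<in> T \<Longrightarrow> \<bar>coboundary s f b\<bar> = coboundary (\<lambda>G b. \<bar>s G b\<bar>) (\<lambda>G. \<bar>f G\<bar>) b"
proof -
  let ?m = "Max (eigenvalues s)" and ?q = "\<lambda>G b. \<bar>s G b\<bar>" and ?g = "\<lambda>G. \<bar>f G\<bar>"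
  have bound: "energy ?q h \<le> ?m * wnorm2 h" for h
    using Max_eigenvalue(2)[OF \<open>S \<noteq> {}\<close>, of ?q h] unfolding eq .
  have "?m * wnorm2 f = energy s f"
    by (rule energy_eigenvector[symmetric]) (use f in \<open>simp add: eigenvector_def\<close>)
  moreover have "energy s f \<le> energy ?q ?g" by (rule energy_le_energy_abs)
  moreover have "energy ?q ?g \<le> ?m * wnorm2 ?g" by (rule bound)
  ultimately have tight: "energy s f = energy ?q ?g" and top: "energy ?q ?g = ?m * wnorm2 ?g"
    unfolding wnorm2_abs by linarith+
  show "\<And>F. F \<in> S \<Longrightarrow> up_laplacian ?q ?g F = ?m * \<bar>f F\<bar>"
    by (rule maximizer_is_eigenvector[OF bound top])
  show "\<And>b. b \<in> T \<Longrightarrow> \<bar>coboundary s f b\<bar> = coboundary ?q ?g b"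
    by (rule abs_coboundary_eq_if_energy_eq[OF tight])
qed

lemma nonneg_eigenvector_zero_spread:
  assumes q_nonneg: "\<And>G b. G \<in> S \<Longrightarrow> b \<in> T \<Longrightarrow> 0 \<le> q G b" and g_nonneg: "\<And>G. G \<in> S \<Longrightarrow> 0 \<le> g G"
    and eig: "up_laplacian q g F = \<mu> * g F"
    and "F \<in> S" "g F = 0" "b \<in> T" "q F b \<noteq> 0" "G \<in> S" "q G b \<noteq> 0"
  shows "g G = 0"
proof -
  have cob_nonneg: "0 \<le> coboundary q g b'" if "b' \<in> T" for b'
    unfolding coboundary_def using that by (intro sum_nonneg) (simp add: g_nonneg q_nonneg)
  have "(\<Sum>b'\<in>T. q F b' * w b' * coboundary q g b') = 0"
    using eig \<open>g F = 0\<close> weight_pos_S[OF \<open>F \<in> S\<close>] unfolding up_laplacian_def by simp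
  moreover have "\<And>b'. b' \<in> T \<Longrightarrow> 0 \<le> q F b' * w b' * coboundary q g b'"
    by (simp add: q_nonneg[OF \<open>F \<in> S\<close>] weight_pos_T cob_nonneg less_imp_le)
  ultimately have "q F b * w b * coboundary q g b = 0"
    using sum_nonneg_0[of T "\<lambda>b'. q F b' * w b' * coboundary q g b'" b] finite_T \<open>b \<in> T\<close> by blast
  then have "(\<Sum>G'\<in>S. q G' b * g G') = 0"
    using \<open>q F b \<noteq> 0\<close> weight_pos_T[OF \<open>b \<in> T\<close>] unfolding coboundary_def by simp
  moreover have "\<And>G'. G' \<in> S \<Longrightarrow> 0 \<le> q G' b * g G'" by (simp add: q_nonneg \<open>b \<in> T\<close> g_nonneg)
  ultimately have "q G b * g G = 0"
    using sum_nonneg_0[of S "\<lambda>G'. q G' b * g G'" G] finite_S \<open>G \<in> S\<close> by blast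
  then show ?thesis using \<open>q G b \<noteq> 0\<close> by simp
qed

lemma nonneg_eigenvector_nowhere_zero:
  assumes disj: "S \<inter> T = {}" and conn: "\<And>x y. x \<in> S \<Longrightarrow> y \<in> S \<Longrightarrow> (bipartite_adj S T q)\<^sup>*\<^sup>* x y"
    and q_nonneg: "\<And>G b. G \<in> S \<Longrightarrow> b \<in> T \<Longrightarrow> 0 \<le> q G b" and g_nonneg: "\<And>G. G \<in> S \<Longrightarrow> 0 \<le> g G"
    and eig: "\<And>F. F \<in> S \<Longrightarrow> up_laplacian q g F = \<mu> * g F"
    and "F1 \<in> S" "g F1 \<noteq> 0" "F \<in> S"
  shows "g F \<noteq> 0"
proof
  assume "g F = 0"
  define Z where "Z x \<longleftrightarrow> (x \<in> S \<longrightarrow> g x = 0) \<and> (x \<in> T \<longrightarrow> (\<forall>G\<in>S. q G x \<noteq> 0 \<longrightarrow> g G = 0))" for x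
  have step: "Z y" if "bipartite_adj S T q x y" "Z x" for x y
    using that(1) unfolding bipartite_adj_def
  proof
    assume xy: "x \<in> S \<and> y \<in> T \<and> q x y \<noteq> 0"
    then have "y \<notin> S" "g x = 0" using disj \<open>Z x\<close> unfolding Z_def by auto
    with xy show "Z y" unfolding Z_def
      using nonneg_eigenvector_zero_spread[OF q_nonneg g_nonneg eig] by blast
  next
    assume yx: "y \<in> S \<and> x \<in> T \<and> q y x \<noteq> 0"
    then have "y \<notin> T" "x \<notin> S" using disj by auto
    with yx \<open>Z x\<close> show "Z y" unfolding Z_def by blast
  qed
  have "Z F" using \<open>F \<in> S\<close> \<open>g F = 0\<close> disj unfolding Z_def by auto
  with conn[OF \<open>F \<in> S\<close> \<open>F1 \<in> S\<close>] have "Z F1"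
    by (induction rule: rtranclp_induct) (auto intro: step)
  then show False using \<open>F1 \<in> S\<close> \<open>g F1 \<noteq> 0\<close> unfolding Z_def by blast
qed

lemma switching_equivalent_abs_if_Max_eq:
  assumes "S \<noteq> {}" and disj: "S \<inter> T = {}"
    and conn: "\<And>x y. x \<in> S \<Longrightarrow> y \<in> S \<Longrightarrow> (bipartite_adj S T s)\<^sup>*\<^sup>* x y"
    and eq: "Max (eigenvalues s) = Max (eigenvalues (\<lambda>G b. \<bar>s G b\<bar>))"
  shows "switching_equivalent_abs S T s"
proof -
  obtain f where f: "eigenvector s (Max (eigenvalues s)) f"
    using Max_eigenvalue(1)[OF \<open>S \<noteq> {}\<close>] unfolding eigenvalues_eq by blast
  note top = top_eigenvector_abs[OF \<open>S \<noteq> {}\<close> eq f]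
  have "bipartite_adj S T (\<lambda>G b. \<bar>s G b\<bar>) = bipartite_adj S T s"
    unfolding bipartite_adj_def by simp
  with conn have conn_abs: "\<And>x y. x \<in> S \<Longrightarrow> y \<in> S \<Longrightarrow> (bipartite_adj S T (\<lambda>G b. \<bar>s G b\<bar>))\<^sup>*\<^sup>* x y"
    by simp
  obtain F1 where "F1 \<in> S" "f F1 \<noteq> 0" using f unfolding eigenvector_def by blast
  have f_nz: "f G \<noteq> 0" if "G \<in> S" for G
    using nonneg_eigenvector_nowhere_zero[where q="\<lambda>G b. \<bar>s G b\<bar>" and g="\<lambda>G. \<bar>f G\<bar>",
        OF disj conn_abs _ _ top(1) \<open>F1 \<in> S\<close> _ that] \<open>f F1 \<noteq> 0\<close> by simp
  \<comment> \<open>By tightness of \<open>|D f| \<le> |D| |f|\<close>, all terms of \<open>D f b\<close> have the sign of \<open>D f b\<close>.\<close>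
  define \<tau> where "\<tau> x = (if x \<in> S then sgn (f x) else if coboundary s f x < 0 then -1 else 1)" for x
  have unit: "\<bar>\<tau> x\<bar> = 1" for x using f_nz by (simp add: \<tau>_def abs_sgn)
  have "\<bar>s G b\<bar> = \<tau> G * \<tau> b * s G b" if "G \<in> S" "b \<in> T" for G b
  proof (cases "s G b = 0")
    case False
    have "sgn (coboundary s f b) = sgn (s G b * f G)"
      unfolding coboundary_def
    proof (rule abs_sum_eq_sum_abs_imp_sgn[OF finite_S _ \<open>G \<in> S\<close>])
      show "\<bar>\<Sum>G\<in>S. s G b * f G\<bar> = (\<Sum>G\<in>S. \<bar>s G b * f G\<bar>)"
        using top(2)[OF \<open>b \<in> T\<close>] unfolding coboundary_abs by (simp add: coboundary_def)
      show "s G b * f G \<noteq> 0" using False f_nz[OF \<open>G \<in> S\<close>] by simp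
    qed
    moreover have "sgn (s G b * f G) \<noteq> 0"
      using False f_nz[OF \<open>G \<in> S\<close>] by (simp add: sgn_mult sgn_eq_0_iff)
    ultimately have "coboundary s f b \<noteq> 0" by auto
    moreover have "b \<notin> S" using disj \<open>b \<in> T\<close> by blast
    ultimately have "\<tau> b = sgn (coboundary s f b)" by (simp add: \<tau>_def sgn_if)
    also have "\<dots> = sgn (s G b) * \<tau> G" using \<open>G \<in> S\<close> \<open>sgn (coboundary s f b) = _\<close>
      by (simp add: \<tau>_def sgn_mult)
    finally have "\<tau> b = sgn (s G b) * \<tau> G" .
    then have "\<tau> G * \<tau> b = sgn (s G b) * (\<tau> G * \<tau> G)" by (simp add: mult_ac)
    then have "\<tau> G * \<tau> b = sgn (s G b)" using abs_eq_1_imp_mult_self_eq_1[OF unit] by simp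
    then show ?thesis by (simp add: abs_sgn mult.commute)
  qed simp
  with unit show ?thesis unfolding switching_equivalent_abs_def by blast
qed

end

section \<open>The incidence graph of a simplicial complex\<close>

lemma faces_disjoint: "faces K i \<inter> faces K (i + 1) = {}"
  unfolding faces_def by auto

lemma abs_inc_sgn:
  assumes "F \<in> faces K i" "Fb \<in> faces K (i + 1)"
  shows "\<bar>inc_sgn ori F Fb\<bar> = (if F \<subseteq> Fb then 1 else 0)"
  using assms unfolding inc_sgn_def perm_sign_def faces_def Let_def by (simp add: abs_mult power_abs)

lemma B_adj_eq_bipartite_adj: "B_adj K i = bipartite_adj (faces K i) (faces K (i + 1)) (inc_sgn ori)"
proof -
  have "inc_sgn ori F Fb \<noteq> 0 \<longleftrightarrow> F \<subseteq> Fb" if "F \<in> faces K i" "Fb \<in> faces K (i + 1)" for F Fb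
    using abs_inc_sgn[OF that, of ori] by (cases "F \<subseteq> Fb") auto
  then show ?thesis unfolding B_adj_def bipartite_adj_def by (intro ext) blast
qed

lemma inc_sgn_eq_0: "\<not> F \<subseteq> Fb \<Longrightarrow> inc_sgn ori F Fb = 0"
  unfolding inc_sgn_def by simp

lemma B_edge_sign_faces:
  assumes "F \<in> faces K i" "Fb \<in> faces K (i + 1)"
  shows "B_edge_sign ori F Fb = inc_sgn ori F Fb" and "B_edge_sign ori Fb F = inc_sgn ori F Fb"
proof -
  have "finite F" "card Fb = card F + 1"
    using assms unfolding faces_def by (auto intro: card_ge_0_finite)
  have "\<not> Fb \<subseteq> F"
  proof
    assume "Fb \<subseteq> F"
    with card_mono[OF \<open>finite F\<close> this] \<open>card Fb = card F + 1\<close> show False by simp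
  qed
  then show "B_edge_sign ori F Fb = inc_sgn ori F Fb" "B_edge_sign ori Fb F = inc_sgn ori F Fb"
    unfolding B_edge_sign_def by (auto simp: inc_sgn_eq_0)
qed

lemma B_edge_sign_commute: "B_edge_sign ori x y = B_edge_sign ori y x"
  unfolding B_edge_sign_def by (auto simp: inc_sgn_eq_0)

lemma B_balanced_iff_positive_cycles:
  "B_balanced K ori i \<longleftrightarrow> positive_cycles (B_adj K i) (B_edge_sign ori)"
  unfolding B_balanced_def B_cycle_def positive_cycles_def cycle_sign_def
    successively_snoc_hd_iff walk_sign_snoc_hd by auto

lemma B_balanced_iff_switching:
  "B_balanced K ori i \<longleftrightarrow>
     (\<exists>\<tau>. (\<forall>x. \<bar>\<tau> x\<bar> = 1) \<and> (\<forall>x y. B_adj K i x y \<longrightarrow> B_edge_sign ori x y = \<tau> x * \<tau> y))"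
  unfolding B_balanced_iff_positive_cycles
proof (rule positive_cycles_iff_switching)
  show "symp (B_adj K i)" unfolding B_adj_def by (auto intro: sympI)
  show "\<And>x. \<not> B_adj K i x x" unfolding B_adj_def faces_def by auto
  show "\<And>x y. B_edge_sign ori x y = B_edge_sign ori y x" by (rule B_edge_sign_commute)
  show "\<And>x y. B_adj K i x y \<Longrightarrow> \<bar>B_edge_sign ori x y\<bar> = 1"
    unfolding B_adj_def by (auto simp: B_edge_sign_faces abs_inc_sgn)
qed

lemma B_edge_switching_iff:
  assumes unit: "\<And>x. \<bar>\<tau> x\<bar> = 1"
  shows "(\<forall>x y. B_adj K i x y \<longrightarrow> B_edge_sign ori x y = \<tau> x * \<tau> y) \<longleftrightarrow>
    (\<forall>G\<in>faces K i. \<forall>b\<in>faces K (i + 1). \<bar>inc_sgn ori G b\<bar> = \<tau> G * \<tau> b * inc_sgn ori G b)"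
    (is "?edges \<longleftrightarrow> ?incidences")
proof -
  have edge_iff: "inc_sgn ori G b = \<tau> G * \<tau> b \<longleftrightarrow> \<bar>inc_sgn ori G b\<bar> = \<tau> G * \<tau> b * inc_sgn ori G b"
    if "G \<in> faces K i" "b \<in> faces K (i + 1)" "G \<subseteq> b" for G b
    using abs_inc_sgn[OF that(1,2), of ori] that(3) unit
    by (intro eq_iff_abs_eq_mult) (simp_all add: abs_mult)
  show ?thesis
  proof
    assume ?edges
    show ?incidences
    proof (intro ballI)
      fix G b assume G: "G \<in> faces K i" and b: "b \<in> faces K (i + 1)"
      show "\<bar>inc_sgn ori G b\<bar> = \<tau> G * \<tau> b * inc_sgn ori G b"
      proof (cases "G \<subseteq> b")
        case True
        then have "B_adj K i G b" using G b unfolding B_adj_def by blast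
        with \<open>?edges\<close> have "inc_sgn ori G b = \<tau> G * \<tau> b"
          using B_edge_sign_faces(1)[where ori=ori, OF G b] by simp
        with edge_iff[OF G b True] show ?thesis by blast
      qed (simp add: inc_sgn_eq_0)
    qed
  next
    assume ?incidences
    show ?edges
    proof (intro allI impI)
      fix x y assume "B_adj K i x y"
      then consider "x \<in> faces K i" "y \<in> faces K (i + 1)" "x \<subseteq> y"
        | "y \<in> faces K i" "x \<in> faces K (i + 1)" "y \<subseteq> x"
        unfolding B_adj_def by blast
      then show "B_edge_sign ori x y = \<tau> x * \<tau> y"
      proof cases
        case 1
        then show ?thesis
          using \<open>?incidences\<close> edge_iff[OF 1] B_edge_sign_faces(1)[where ori=ori, OF 1(1,2)] by simp
      next
        case 2
        then show ?thesis
          using \<open>?incidences\<close> edge_iff[OF 2] B_edge_sign_faces(2)[where ori=ori, OF 2(1,2)]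
          by (simp add: mult.commute)
      qed
    qed
  qed
qed

lemma B_balanced_iff_switching_equivalent_abs:
  "B_balanced K ori i \<longleftrightarrow> switching_equivalent_abs (faces K i) (faces K (i + 1)) (inc_sgn ori)"
  unfolding B_balanced_iff_switching switching_equivalent_abs_def
  using B_edge_switching_iff by blast

theorem mainTheorem2:
  fixes K :: "'v set set" and ori :: "'v set \<Rightarrow> 'v list" and w :: "'v set \<Rightarrow> real" and i :: nat
  assumes "simplicial_complex K"
    and "is_orientation K ori"
    and "is_weight K w"
    and "faces K i \<noteq> {}"
  shows "lmax_up_laplacian K ori w i \<le> lmax_up_signless K ori w i
    \<and> (B_balanced K ori i \<longrightarrow> lmax_up_laplacian K ori w i = lmax_up_signless K ori w i)
    \<and> (B_connected K i \<longrightarrow>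
         (lmax_up_laplacian K ori w i = lmax_up_signless K ori w i \<longleftrightarrow> B_balanced K ori i))"
proof -
  let ?S = "faces K i" and ?T = "faces K (i + 1)"
  interpret weighted_bipartite ?S ?T w
    using assms(1,3) unfolding simplicial_complex_def is_weight_def faces_def
    by unfold_locales auto
  have "up_eigenvalues K w s i = eigenvalues s" for s
    unfolding up_eigenvalues_def eigenvalues_def up_op_def up_laplacian_def coboundary_def ..
  then have L: "lmax_up_laplacian K ori w i = Max (eigenvalues (inc_sgn ori))"
    and Q: "lmax_up_signless K ori w i = Max (eigenvalues (\<lambda>F Fb. \<bar>inc_sgn ori F Fb\<bar>))"
    unfolding lmax_up_laplacian_def lmax_up_signless_def by simp_all
  have conn: "(bipartite_adj ?S ?T (inc_sgn ori))\<^sup>*\<^sup>* x y" if "B_connected K i" "x \<in> ?S" "y \<in> ?S" for x y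
    using that unfolding B_connected_def B_verts_def B_adj_eq_bipartite_adj[of K i ori] by blast
  show ?thesis
    unfolding L Q B_balanced_iff_switching_equivalent_abs
    using Max_eigenvalue_le_abs[OF assms(4)] eigenvalues_abs_eq_if_switching_equivalent
      switching_equivalent_abs_if_Max_eq[OF assms(4) faces_disjoint conn] by auto
qed

end
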